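(* Under the standing assumptions, let $\{x_i\}_{i=1}^N$ be a solution of the delayed Hegselmann–Krause system, and let $C\in(0,1)$ be as defined below. Put $\tilde C:=1-e^{-K\bar\tau}(1-C)\in(0,1)$. Then $D_{n+1}\le\tilde C\,D_{n-2}$ for all integers $n\ge2$, and consequently $D_{3n}\le\tilde C^{\,n}D_0$ for all $n\in\mathbb{N}_0$.
   Context: Standing assumptions: $N\ge 2$, $d\ge 1$, $\bar\tau>0$; $\tau:[0,\infty)\to[0,\bar\tau]$ continuous; $\psi:\mathbb{R}^d\times\mathbb{R}^d\to\mathbb{R}$ continuous, bounded and strictly positive, $K:=\|\psi\|_\infty$; initial data $x_i^0:[-\bar\tau,0]\to\mathbb{R}^d$ continuous. The delayed Hegselmann–Krause system is $$\frac{d}{dt}x_i(t)=\frac{1}{N-1}\sum_{j\ne i}\psi\big(x_i(t),x_j(t-\tau(t))\big)\big(x_j(t-\tau(t))-x_i(t)\big),\quad t>0,$$ with $x_i=x_i^0$ on $[-\bar\tau,0]$; a solution means continuous $x_i:[-\bar\tau,\infty)\to\mathbb{R}^d$, differentiable on $(0,\infty)$, satisfying this. For $n\in\mathbb{N}_0$, $D_n:=\max_{i,j=1,\dots,N}\max_{s,t\in[n\bar\tau-\bar\tau,\,n\bar\tau]}|x_i(s)-x_j(t)|$. $M^0:=\max_{i}\max_{s\in[-\bar\tau,0]}|x_i(s)|$, $\psi_0:=\min_{|y|,|z|\le M^0}\psi(y,z)$, and $C:=\max\{1-e^{-2K\bar\tau},\ 1-\frac{\psi_0}{K}(1-e^{-K\bar\tau})\}$.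 *)

theory Defs
  imports "HOL-Analysis.Analysis"
begin

definition is_dHK_solution ::
  "nat \<Rightarrow> real \<Rightarrow> (real \<Rightarrow> real) \<Rightarrow> ('a::euclidean_space \<Rightarrow> 'a \<Rightarrow> real)
     \<Rightarrow> (nat \<Rightarrow> real \<Rightarrow> 'a) \<Rightarrow> bool" where
  "is_dHK_solution N taub tau psi x \<longleftrightarrow>
     (\<forall>i\<in>{1..N}. continuous_on {-taub..} (x i)) \<and>
     (\<forall>i\<in>{1..N}. \<forall>t>0.
        (x i has_vector_derivative
           ((1 / (real N - 1)) *\<^sub>R
              (\<Sum>j\<in>{1..N}-{i}. psi (x i t) (x j (t - tau t)) *\<^sub>R (x j (t - tau t) - x i t))))
        (at t))"

definition diamD :: "nat \<Rightarrow> real \<Rightarrow> (nat \<Rightarrow> real \<Rightarrow> 'a::euclidean_space) \<Rightarrow> nat \<Rightarrow> real" where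
  "diamD N taub x n =
     (SUP p \<in> {(i,j,s,t). i \<in> {1..N} \<and> j \<in> {1..N} \<and>
                 s \<in> {real n * taub - taub .. real n * taub} \<and>
                 t \<in> {real n * taub - taub .. real n * taub}}.
        (case p of (i,j,s,t) \<Rightarrow> norm (x i s - x j t)))"

definition Kconst :: "('a \<Rightarrow> 'a \<Rightarrow> real) \<Rightarrow> real" where
  "Kconst psi = (SUP p \<in> UNIV. \<bar>psi (fst p) (snd p)\<bar>)"

definition M0 :: "nat \<Rightarrow> real \<Rightarrow> (nat \<Rightarrow> real \<Rightarrow> 'a::euclidean_space) \<Rightarrow> real" where
  "M0 N taub x = (SUP p \<in> {1..N} \<times> {-taub..0}. norm (x (fst p) (snd p)))"

definition psi0 :: "('a::euclidean_space \<Rightarrow> 'a \<Rightarrow> real) \<Rightarrow> real \<Rightarrow> real" where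
  "psi0 psi M = (INF p \<in> cball 0 M \<times> cball 0 M. psi (fst p) (snd p))"

definition Cconst :: "real \<Rightarrow> real \<Rightarrow> real \<Rightarrow> real" where
  "Cconst K taub p0 = max (1 - exp (-2 * K * taub)) (1 - p0 / K * (1 - exp (- K * taub)))"

end

theory Submission
  imports Defs
begin

text \<open>Fix a direction v and let M, m be upper and lower bounds of the projections v \<bullet> x_j
  over one delay window. Such bounds persist for all later times, and the gaps M - v \<bullet> x_i and
  v \<bullet> x_i - m decay at most at rate K. Two windows later the two gaps of any pair of agents
  i, l add up to at least (1 - C)(M - m): either at some delayed time the projection of l lies above
  that of i, and the gaps already add up to M - m and then only decay, or it never does, and then
  every other agent pulls i down and l up with weight at least psi0, so the gap sum obeys a
  linear differential inequality with source psi0 (M - m). One more window of decay gives the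
  factor C~ for the spread of the projections; v in the direction of x_i(s) - x_j(t) turns this
  into the bound on the diameters.\<close>

lemma gronwall_lower_bound:
  fixes f f' :: "real \<Rightarrow> real"
  assumes K: "K > 0" and ab: "a \<le> b" and f_cont: "continuous_on {a..b} f"
    and f_deriv: "\<And>r. a < r \<Longrightarrow> r < b \<Longrightarrow> (f has_real_derivative f' r) (at r)"
    and f'_ge: "\<And>r. a < r \<Longrightarrow> r < b \<Longrightarrow> c - K * f r \<le> f' r"
  shows "exp (-K*(b-a)) * f a + c/K * (1 - exp (-K*(b-a))) \<le> f b"
proof -
  define G where "G r = exp (K*r) * (f r - c/K)" for r
  have "G a \<le> G b"
  proof (rule DERIV_nonneg_imp_increasing_open[OF ab])
    fix r assume r: "a < r" "r < b"
    have "(G has_real_derivative exp (K*r) * (f' r + K * f r - c)) (at r)"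
      unfolding G_def using K
      by (auto intro!: derivative_eq_intros f_deriv r simp: field_simps)
    moreover have "0 \<le> exp (K*r) * (f' r + K * f r - c)"
      using f'_ge[OF r] by simp
    ultimately show "\<exists>y. (G has_real_derivative y) (at r) \<and> 0 \<le> y" by blast
  qed (unfold G_def, intro continuous_intros f_cont)
  then have "exp (-K*(b-a)) * (f a - c/K) \<le> f b - c/K"
    unfolding G_def by (simp add: exp_minus_inverse field_simps exp_diff mult_exp_exp)
  then show ?thesis by (simp add: algebra_simps)
qed

lemma inner_sgn_self: "sgn y \<bullet> y = norm y"
  by (cases "y = 0") (simp_all add: sgn_div_norm power2_norm_eq_inner[symmetric] power2_eq_square)

lemma inner_le_if_norm_le_one:
  assumes "norm v \<le> 1" "norm y \<le> B"
  shows "v \<bullet> y \<le> B"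
  using norm_cauchy_schwarz[of v y] mult_mono[OF assms] by simp

lemma sum_gaps_ge:
  fixes y :: "nat \<Rightarrow> real"
  assumes i: "i \<in> {1..N}" and l: "l \<in> {1..N}" and order: "y l \<le> y i"
  shows "(real N - 1) * (M - m) \<le> (\<Sum>j\<in>{1..N}-{i}. M - y j) + (\<Sum>j\<in>{1..N}-{l}. y j - m)"
proof -
  have "(\<Sum>j\<in>{1..N}-{i}. M - y j) = (\<Sum>j\<in>{1..N}. M - y j) - (M - y i)"
    and "(\<Sum>j\<in>{1..N}-{l}. y j - m) = (\<Sum>j\<in>{1..N}. y j - m) - (y l - m)"
    using sum.remove[of "{1..N}" i "\<lambda>j. M - y j"] sum.remove[of "{1..N}" l "\<lambda>j. y j - m"] i l
    by simp_all
  moreover have "(\<Sum>j\<in>{1..N}. M - y j) + (\<Sum>j\<in>{1..N}. y j - m) = real N * (M - m)"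
    by (simp add: sum.distrib[symmetric])
  ultimately show ?thesis using order by (simp add: algebra_simps)
qed

lemma bounds_of_oscillation_le:
  fixes g :: "'b \<Rightarrow> real"
  assumes ne: "W \<noteq> {}" and osc: "\<And>a b. a \<in> W \<Longrightarrow> b \<in> W \<Longrightarrow> g a - g b \<le> D"
  obtains M m where "\<And>a. a \<in> W \<Longrightarrow> g a \<le> M" "\<And>a. a \<in> W \<Longrightarrow> m \<le> g a" "M - m \<le> D"
proof -
  obtain b0 where b0: "b0 \<in> W" using ne by blast
  have above: "bdd_above (g ` W)"
    using osc[OF _ b0] by (intro bdd_aboveI2[where M="D + g b0"]) (simp add: algebra_simps)
  have below: "bdd_below (g ` W)"
    using osc[OF b0] by (intro bdd_belowI2[where m="g b0 - D"]) (simp add: algebra_simps)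
  have "Sup (g ` W) \<le> D + g b" if "b \<in> W" for b
    using osc[OF _ that] by (intro cSUP_least[OF ne]) (simp add: algebra_simps)
  then have "Sup (g ` W) - D \<le> Inf (g ` W)"
    by (intro cINF_greatest[OF ne]) (simp add: algebra_simps)
  then show ?thesis
    by (intro that[of "Sup (g ` W)" "Inf (g ` W)"] cSUP_upper[OF _ above] cINF_lower[OF below]) auto
qed

lemma one_minus_Cconst:
  "1 - Cconst K taub p0 = min (exp (-2*K*taub)) (p0/K * (1 - exp (-K*taub)))"
  unfolding Cconst_def by (simp add: max_def min_def)

lemma contraction_factor_nonneg:
  assumes "K > 0" "taub > 0" "p0 \<ge> 0"
  shows "0 \<le> 1 - exp (-K*taub) * (1 - Cconst K taub p0)"
proof -
  have "exp (-K*taub) \<le> 1" using assms by simp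
  moreover have "0 \<le> 1 - Cconst K taub p0" "1 - Cconst K taub p0 \<le> 1"
    unfolding one_minus_Cconst using assms by (auto intro: min.coboundedI1)
  ultimately have "exp (-K*taub) * (1 - Cconst K taub p0) \<le> 1" by (rule mult_le_one)
  then show ?thesis by simp
qed

lemma geometric_decay_every_third:
  fixes D :: "nat \<Rightarrow> real"
  assumes step: "\<And>n. n \<ge> 2 \<Longrightarrow> D (n+1) \<le> c * D (n-2)" and c: "c \<ge> 0"
  shows "D (3*n) \<le> c^n * D 0"
proof (induction n)
  case (Suc n)
  have "3 * Suc n = (3*n+2) + 1" "3*n+2-2 = 3*n" by simp_all
  then have "D (3 * Suc n) \<le> c * D (3*n)" using step[of "3*n+2"] by (simp only:)
  also have "\<dots> \<le> c * (c^n * D 0)" using Suc c by (rule mult_left_mono)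
  finally show ?case by simp
qed simp

lemma psi_le_Kconst:
  assumes "bounded (range (\<lambda>p. psi (fst p) (snd p)))"
  shows "psi y z \<le> Kconst psi"
proof -
  have "bdd_above (range (\<lambda>p. \<bar>psi (fst p) (snd p)\<bar>))"
    using assms unfolding bounded_iff by (metis (mono_tags) bdd_aboveI2 real_norm_def rangeI)
  then have "\<bar>psi (fst (y,z)) (snd (y,z))\<bar> \<le> Kconst psi"
    unfolding Kconst_def by (rule cSUP_upper[rotated]) simp
  then show ?thesis by simp
qed

lemma psi0_nonneg:
  assumes "\<And>y z. psi y z > 0" "B \<ge> 0"
  shows "0 \<le> psi0 psi B"
  unfolding psi0_def using assms by (intro cINF_greatest) (auto intro: less_imp_le)

lemma psi0_le:
  assumes "\<And>y z. psi y z > 0" "norm y \<le> B" "norm z \<le> B"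
  shows "psi0 psi B \<le> psi y z"
proof -
  have bdd: "bdd_below ((\<lambda>p. psi (fst p) (snd p)) ` (cball 0 B \<times> cball 0 B))"
    using assms(1) by (auto intro!: bdd_belowI2[where m=0] less_imp_le)
  have "(y, z) \<in> cball 0 B \<times> cball 0 B" using assms(2,3) by simp
  from cINF_lower[OF bdd this] show ?thesis unfolding psi0_def by simp
qed

lemma deriv_nonneg_at_upcrossing:
  fixes f :: "real \<Rightarrow> real"
  assumes deriv: "(f has_real_derivative D) (at r)" and "a < r"
    and before: "\<And>t. a \<le> t \<Longrightarrow> t < r \<Longrightarrow> f t < 0" and "0 \<le> f r"
  shows "0 \<le> D"
proof (rule ccontr)
  assume "\<not> 0 \<le> D"
  then obtain d where "d > 0" and dec: "\<And>h. 0 < h \<Longrightarrow> h < d \<Longrightarrow> f r < f (r - h)"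
    using DERIV_neg_dec_left[OF deriv] by force
  define h where "h = min (d/2) ((r - a)/2)"
  have "0 < h" "h < d" "a \<le> r - h" "r - h < r"
    using \<open>d > 0\<close> \<open>a < r\<close> unfolding h_def by (auto simp: min_def field_simps)
  then show False using dec before \<open>0 \<le> f r\<close> by fastforce
qed

lemma obtain_first_time:
  fixes S :: "real set"
  assumes "closed S" "S \<noteq> {}" "bdd_below S"
  obtains t where "t \<in> S" "\<And>s. s < t \<Longrightarrow> s \<notin> S"
  using closed_contains_Inf[OF assms(2,3,1)] cInf_lower[OF _ assms(3)] by (meson not_le)

locale delayed_HK =
  fixes N :: nat and taub :: real and tau :: "real \<Rightarrow> real"
    and psi :: "'a::euclidean_space \<Rightarrow> 'a \<Rightarrow> real" and K :: real
    and x :: "nat \<Rightarrow> real \<Rightarrow> 'a"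
  assumes N2: "N \<ge> 2"
    and taub_pos: "taub > 0"
    and tau_range: "\<And>t. t \<ge> 0 \<Longrightarrow> tau t \<in> {0..taub}"
    and psi_pos: "\<And>y z. psi y z > 0"
    and psi_le: "\<And>y z. psi y z \<le> K"
    and solution: "is_dHK_solution N taub tau psi x"
begin

definition velocity :: "'a \<Rightarrow> nat \<Rightarrow> real \<Rightarrow> real" where
  "velocity v i t = 1 / (real N - 1) *
     (\<Sum>j\<in>{1..N}-{i}. psi (x i t) (x j (t - tau t)) * (v \<bullet> x j (t - tau t) - v \<bullet> x i t))"

definition upper_on_window :: "'a \<Rightarrow> real \<Rightarrow> real \<Rightarrow> bool" where
  "upper_on_window v M T0 \<longleftrightarrow> (\<forall>j\<in>{1..N}. \<forall>q\<in>{T0-taub..T0}. v \<bullet> x j q \<le> M)"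

lemma K_pos: "K > 0"
  using psi_pos[of 0 0] psi_le[of 0 0] by linarith

lemma velocity_uminus: "velocity (-v) i t = - velocity v i t"
  unfolding velocity_def inner_minus_left by (simp add: sum_subtractf algebra_simps)

lemma continuous_on_solution: "i \<in> {1..N} \<Longrightarrow> continuous_on {-taub..} (x i)"
  using solution unfolding is_dHK_solution_def by blast

lemma continuous_on_projection:
  "i \<in> {1..N} \<Longrightarrow> S \<subseteq> {-taub..} \<Longrightarrow> continuous_on S (\<lambda>t. v \<bullet> x i t)"
  by (intro continuous_on_inner continuous_on_const continuous_on_subset[OF continuous_on_solution])

lemma projection_has_derivative:
  assumes i: "i \<in> {1..N}" and t: "t > 0"
  shows "((\<lambda>t. v \<bullet> x i t) has_real_derivative velocity v i t) (at t)"
proof -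
  have "(x i has_vector_derivative
           (1 / (real N - 1)) *\<^sub>R
              (\<Sum>j\<in>{1..N}-{i}. psi (x i t) (x j (t - tau t)) *\<^sub>R (x j (t - tau t) - x i t))) (at t)"
    using solution i t unfolding is_dHK_solution_def by blast
  from bounded_linear.has_vector_derivative[OF bounded_linear_inner_right this, of v]
  show ?thesis
    unfolding has_real_derivative_iff_has_vector_derivative velocity_def
    by (simp add: inner_sum_right inner_diff_right)
qed

text \<open>The interaction weights lie in [p0, K]: the upper limit bounds how fast agent i can
  approach M, the lower one how strongly the others pull it away from M.\<close>
lemma velocity_le_gap:
  assumes i: "i \<in> {1..N}" and yi: "v \<bullet> x i r \<le> M"
    and yj: "\<And>j. j \<in> {1..N} \<Longrightarrow> v \<bullet> x j (r - tau r) \<le> M"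
    and p0: "\<And>j. j \<in> {1..N} \<Longrightarrow> p0 \<le> psi (x i r) (x j (r - tau r))"
  shows "p0 * (\<Sum>j\<in>{1..N}-{i}. M - v \<bullet> x j (r - tau r))
           \<le> (real N - 1) * (K * (M - v \<bullet> x i r) - velocity v i r)"
proof -
  let ?A = "{1..N}-{i}" and ?q = "r - tau r"
  have card: "real (card ?A) = real N - 1" using i N2 by (simp add: of_nat_diff)
  have "p0 * (\<Sum>j\<in>?A. M - v \<bullet> x j ?q) - (real N - 1) * (K * (M - v \<bullet> x i r))
      = (\<Sum>j\<in>?A. p0 * (M - v \<bullet> x j ?q) - K * (M - v \<bullet> x i r))"
    by (simp only: sum_subtractf sum_distrib_left[symmetric] sum_constant card) (simp add: algebra_simps)
  also have "\<dots> \<le> (\<Sum>j\<in>?A. - (psi (x i r) (x j ?q) * (v \<bullet> x j ?q - v \<bullet> x i r)))"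
  proof (rule sum_mono)
    fix j assume j: "j \<in> ?A"
    let ?w = "psi (x i r) (x j ?q)"
    have "p0 * (M - v \<bullet> x j ?q) \<le> ?w * (M - v \<bullet> x j ?q)"
      using p0 yj j by (intro mult_right_mono) auto
    moreover have "?w * (M - v \<bullet> x i r) \<le> K * (M - v \<bullet> x i r)"
      using psi_le yi by (intro mult_right_mono) auto
    ultimately show "p0 * (M - v \<bullet> x j ?q) - K * (M - v \<bullet> x i r)
        \<le> - (?w * (v \<bullet> x j ?q - v \<bullet> x i r))"
      by (simp add: algebra_simps)
  qed
  also have "\<dots> = - (real N - 1) * velocity v i r"
    using N2 unfolding velocity_def sum_negf by (simp add: field_simps)
  finally show ?thesis by (simp add: algebra_simps)
qed

lemma velocity_le:
  assumes "i \<in> {1..N}" "v \<bullet> x i r \<le> M" "\<And>j. j \<in> {1..N} \<Longrightarrow> v \<bullet> x j (r - tau r) \<le> M"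
  shows "velocity v i r \<le> K * (M - v \<bullet> x i r)"
proof -
  have "0 \<le> (real N - 1) * (K * (M - v \<bullet> x i r) - velocity v i r)"
    using velocity_le_gap[OF assms, of 0] psi_pos by (simp add: less_imp_le)
  then show ?thesis using N2 by (simp add: zero_le_mult_iff)
qed

text \<open>Invariance of an upper bound is proved against the moving barrier
  M + e (1 + (r - T0)): at the first time some agent touches it, the agent that is highest at
  that moment has nonpositive velocity (all delayed positions lie below it), whereas the
  barrier rises with slope e > 0.\<close>
lemma projection_below_barrier:
  assumes T0: "T0 \<ge> 0" and init: "upper_on_window v M T0" and e: "e > 0"
    and j: "j \<in> {1..N}" and r: "T0 \<le> r"
  shows "v \<bullet> x j r < M + e * (1 + (r - T0))"
proof (rule ccontr)
  define b where "b t = M + e * (1 + (t - T0))" for t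
  define S where "S = (\<Union>j\<in>{1..N}. {T0..} \<inter> (\<lambda>t. v \<bullet> x j t - b t) -` {0..})"
  assume "\<not> ?thesis"
  then have "r \<in> S" using j r unfolding S_def b_def by force
  moreover have "closed S"
    unfolding S_def b_def using T0 taub_pos
    by (intro closed_UN ballI continuous_closed_preimage continuous_intros continuous_on_projection)
      auto
  moreover have "bdd_below S" unfolding S_def by (auto intro: bdd_belowI[of _ T0])
  ultimately obtain rs where "rs \<in> S" and first: "\<And>t. t < rs \<Longrightarrow> t \<notin> S"
    using obtain_first_time by blast
  then obtain j0 where j0: "j0 \<in> {1..N}" "b rs \<le> v \<bullet> x j0 rs" and rs_ge: "T0 \<le> rs"
    unfolding S_def by auto
  have below: "v \<bullet> x k t < b t" if "k \<in> {1..N}" "T0 \<le> t" "t < rs" for k t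
    using first[of t] that unfolding S_def by (auto simp: not_le)
  have early: "v \<bullet> x k t \<le> M" if "k \<in> {1..N}" "t \<in> {T0-taub..T0}" for k t
    using init that unfolding upper_on_window_def by blast
  have M_lt_b: "M < b t" if "T0 \<le> t" for t
    using e that unfolding b_def by simp
  obtain i where i: "i \<in> {1..N}" and imax: "Max ((\<lambda>k. v \<bullet> x k rs) ` {1..N}) = v \<bullet> x i rs"
    using obtains_MAX[of "{1..N}"] N2 by auto
  have highest: "v \<bullet> x k rs \<le> v \<bullet> x i rs" if "k \<in> {1..N}" for k
    using that by (simp flip: imax)
  have touch: "b rs \<le> v \<bullet> x i rs" using j0 highest[of j0] by linarith
  have rs_gt: "T0 < rs"
  proof (rule ccontr)
    assume "\<not> T0 < rs"
    then have "rs = T0" using rs_ge by simp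
    then show False using early[OF i, of T0] M_lt_b[of T0] touch taub_pos by auto
  qed
  have delayed_below: "v \<bullet> x k (rs - tau rs) \<le> v \<bullet> x i rs" if k: "k \<in> {1..N}" for k
  proof -
    have tau: "0 \<le> tau rs" "tau rs \<le> taub" using tau_range rs_ge T0 by auto
    consider "tau rs = 0" | "rs - tau rs < T0" | "T0 \<le> rs - tau rs" "rs - tau rs < rs"
      using tau by linarith
    then show ?thesis
    proof cases
      case 2
      then show ?thesis using early[OF k, of "rs - tau rs"] tau rs_ge M_lt_b[OF rs_ge] touch by auto
    next
      case 3
      moreover have "b (rs - tau rs) \<le> b rs" unfolding b_def using e tau by simp
      ultimately show ?thesis using below[OF k] touch by fastforce
    qed (use highest k in simp)
  qed
  have "((\<lambda>t. v \<bullet> x i t - b t) has_real_derivative velocity v i rs - e) (at rs)"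
    unfolding b_def using T0 rs_gt
    by (auto intro!: derivative_eq_intros projection_has_derivative[OF i])
  then have "0 \<le> velocity v i rs - e"
    by (rule deriv_nonneg_at_upcrossing[OF _ rs_gt]) (use below[OF i] touch in auto)
  then show False
    using velocity_le[OF i order_refl delayed_below] e by simp
qed

lemma projection_le_after_window:
  assumes T0: "T0 \<ge> 0" and init: "upper_on_window v M T0"
    and j: "j \<in> {1..N}" and r: "T0 - taub \<le> r"
  shows "v \<bullet> x j r \<le> M"
proof (cases "r \<le> T0")
  case True
  then show ?thesis using init j r unfolding upper_on_window_def by auto
next
  case False
  show ?thesis
  proof (rule field_le_epsilon)
    fix e :: real assume "0 < e"
    define c where "c = 1 + (r - T0)"
    have "c > 0" using False unfolding c_def by simp
    then have "v \<bullet> x j r < M + e / c * c"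
      using projection_below_barrier[OF T0 init _ j, of "e / c" r] \<open>0 < e\<close> False
      unfolding c_def by simp
    then show "v \<bullet> x j r \<le> M + e" using \<open>c > 0\<close> by simp
  qed
qed

lemma projection_ge_after_window:
  assumes "T0 \<ge> 0" "upper_on_window (-v) (-m) T0" "j \<in> {1..N}" "T0 - taub \<le> r"
  shows "m \<le> v \<bullet> x j r"
  using projection_le_after_window[OF assms] by simp

lemma upper_gap_decay:
  assumes T0: "T0 \<ge> 0" and init: "upper_on_window v M T0"
    and i: "i \<in> {1..N}" and ab: "T0 \<le> a" "a \<le> b" "b - a \<le> d"
  shows "exp (-K*d) * (M - v \<bullet> x i a) \<le> M - v \<bullet> x i b"
proof -
  have "exp (-K*d) * (M - v \<bullet> x i a) \<le> exp (-K*(b-a)) * (M - v \<bullet> x i a)"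
    using ab K_pos projection_le_after_window[OF T0 init i, of a] taub_pos
    by (intro mult_right_mono) auto
  also have "\<dots> + 0 / K * (1 - exp (-K*(b-a))) \<le> M - v \<bullet> x i b"
  proof (rule gronwall_lower_bound[OF K_pos \<open>a \<le> b\<close>])
    show "continuous_on {a..b} (\<lambda>r. M - v \<bullet> x i r)"
      using ab T0 taub_pos by (intro continuous_intros continuous_on_projection[OF i]) auto
  next
    fix r assume r: "a < r" "r < b"
    then show "((\<lambda>r. M - v \<bullet> x i r) has_real_derivative - velocity v i r) (at r)"
      using ab T0 by (auto intro!: derivative_eq_intros projection_has_derivative[OF i])
    have "T0 - taub \<le> r - tau r" using tau_range[of r] r ab T0 by auto
    then have "velocity v i r \<le> K * (M - v \<bullet> x i r)"
      using r ab taub_pos i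
      by (intro velocity_le[OF i] projection_le_after_window[OF T0 init]) auto
    then show "0 - K * (M - v \<bullet> x i r) \<le> - velocity v i r" by simp
  qed
  finally show ?thesis by simp
qed

lemma lower_gap_decay:
  assumes "T0 \<ge> 0" "upper_on_window (-v) (-m) T0"
    and "i \<in> {1..N}" "T0 \<le> a" "a \<le> b" "b - a \<le> d"
  shows "exp (-K*d) * (v \<bullet> x i a - m) \<le> v \<bullet> x i b - m"
  using upper_gap_decay[OF assms] by simp

lemma gap_sum_velocity_ge:
  assumes T0: "T0 \<ge> 0" and initU: "upper_on_window v M T0"
    and initL: "upper_on_window (-v) (-m) T0"
    and p0: "0 \<le> p0" and p0_le: "\<And>j k t. j \<in> {1..N} \<Longrightarrow> k \<in> {1..N} \<Longrightarrow> t \<ge> 0 \<Longrightarrow>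
        p0 \<le> psi (x j t) (x k (t - tau t))"
    and i: "i \<in> {1..N}" and l: "l \<in> {1..N}" and r: "T0 \<le> r"
    and order: "v \<bullet> x l (r - tau r) \<le> v \<bullet> x i (r - tau r)"
  shows "p0 * (M - m) - K * ((M - v \<bullet> x i r) + (v \<bullet> x l r - m))
           \<le> velocity v l r - velocity v i r"
proof -
  let ?q = "r - tau r"
  have q: "T0 - taub \<le> ?q" using tau_range[of r] r T0 by auto
  have r': "T0 - taub \<le> r" and r0: "0 \<le> r" using r T0 taub_pos by simp_all
  have up: "\<And>j t. j \<in> {1..N} \<Longrightarrow> T0 - taub \<le> t \<Longrightarrow> v \<bullet> x j t \<le> M"
    using projection_le_after_window[OF T0 initU] .
  have lo: "\<And>j t. j \<in> {1..N} \<Longrightarrow> T0 - taub \<le> t \<Longrightarrow> (-v) \<bullet> x j t \<le> -m"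
    using projection_le_after_window[OF T0 initL] .
  have "p0 * (\<Sum>j\<in>{1..N}-{i}. M - v \<bullet> x j ?q)
      \<le> (real N - 1) * (K * (M - v \<bullet> x i r) - velocity v i r)"
    using velocity_le_gap[OF i up[OF i r'] up[OF _ q] p0_le[OF i _ r0]] .
  moreover have "p0 * (\<Sum>j\<in>{1..N}-{l}. v \<bullet> x j ?q - m)
      \<le> (real N - 1) * (K * (v \<bullet> x l r - m) + velocity v l r)"
    using velocity_le_gap[OF l lo[OF l r'] lo[OF _ q] p0_le[OF l _ r0]]
    by (simp add: velocity_uminus algebra_simps)
  moreover have "p0 * ((real N - 1) * (M - m))
      \<le> p0 * ((\<Sum>j\<in>{1..N}-{i}. M - v \<bullet> x j ?q) + (\<Sum>j\<in>{1..N}-{l}. v \<bullet> x j ?q - m))"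
    using sum_gaps_ge[OF i l, of "\<lambda>j. v \<bullet> x j ?q"] order p0 by (intro mult_left_mono) auto
  ultimately have "(real N - 1) * (p0 * (M - m))
      \<le> (real N - 1) * (K * ((M - v \<bullet> x i r) + (v \<bullet> x l r - m)) + velocity v l r - velocity v i r)"
    by (simp add: algebra_simps)
  moreover have "real N - 1 > 0" using N2 by simp
  ultimately show ?thesis by (simp only: mult_le_cancel_left_pos)
qed

lemma gap_sum_ge_if_ordered:
  assumes T0: "T0 \<ge> 0" and initU: "upper_on_window v M T0"
    and initL: "upper_on_window (-v) (-m) T0"
    and p0: "0 \<le> p0" and p0_le: "\<And>j k t. j \<in> {1..N} \<Longrightarrow> k \<in> {1..N} \<Longrightarrow> t \<ge> 0 \<Longrightarrow>
        p0 \<le> psi (x j t) (x k (t - tau t))"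
    and i: "i \<in> {1..N}" and l: "l \<in> {1..N}" and w: "T0 + 2*taub \<le> w"
    and ordered: "\<And>r. r \<in> {w-taub..w} \<Longrightarrow> v \<bullet> x l (r - tau r) \<le> v \<bullet> x i (r - tau r)"
  shows "p0 / K * (1 - exp (-K*taub)) * (M - m) \<le> (M - v \<bullet> x i w) + (v \<bullet> x l w - m)"
proof -
  define Phi where "Phi r = (M - v \<bullet> x i r) + (v \<bullet> x l r - m)" for r
  have "exp (-K*(w - (w-taub))) * Phi (w-taub) + p0 * (M - m) / K * (1 - exp (-K*(w - (w-taub))))
      \<le> Phi w"
  proof (rule gronwall_lower_bound[OF K_pos])
    show "w - taub \<le> w" using taub_pos by simp
    show "continuous_on {w-taub..w} Phi"
      unfolding Phi_def using w T0 taub_pos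
      by (intro continuous_intros continuous_on_projection[OF i] continuous_on_projection[OF l])
        auto
  next
    fix r assume r: "w - taub < r" "r < w"
    then show "(Phi has_real_derivative (velocity v l r - velocity v i r)) (at r)"
      unfolding Phi_def using w T0 taub_pos
      by (auto intro!: derivative_eq_intros projection_has_derivative[OF i]
          projection_has_derivative[OF l])
    show "p0 * (M - m) - K * Phi r \<le> velocity v l r - velocity v i r"
      unfolding Phi_def using ordered r w T0 taub_pos
      by (intro gap_sum_velocity_ge[OF T0 initU initL p0 p0_le i l]) auto
  qed
  moreover have "0 \<le> exp (-K*taub) * Phi (w-taub)"
    unfolding Phi_def using w T0 taub_pos
      projection_le_after_window[OF T0 initU i, of "w-taub"]
      projection_ge_after_window[OF T0 initL l, of "w-taub"]
    by simp
  ultimately have "p0 * (M - m) / K * (1 - exp (-K*taub)) \<le> Phi w"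
    by simp
  then show ?thesis unfolding Phi_def by (simp add: mult_ac)
qed

lemma gap_sum_ge:
  assumes T0: "T0 \<ge> 0" and initU: "upper_on_window v M T0"
    and initL: "upper_on_window (-v) (-m) T0"
    and p0: "0 \<le> p0" and p0_le: "\<And>j k t. j \<in> {1..N} \<Longrightarrow> k \<in> {1..N} \<Longrightarrow> t \<ge> 0 \<Longrightarrow>
        p0 \<le> psi (x j t) (x k (t - tau t))"
    and i: "i \<in> {1..N}" and l: "l \<in> {1..N}" and w: "T0 + 2*taub \<le> w"
  shows "(1 - Cconst K taub p0) * (M - m) \<le> (M - v \<bullet> x i w) + (v \<bullet> x l w - m)"
proof -
  have Mm: "0 \<le> M - m"
    using projection_le_after_window[OF T0 initU i, of T0]
      projection_ge_after_window[OF T0 initL i, of T0] taub_pos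
    by simp
  have by_min: "(1 - Cconst K taub p0) * (M - m) \<le> exp (-2*K*taub) * (M - m)"
    "(1 - Cconst K taub p0) * (M - m) \<le> p0 / K * (1 - exp (-K*taub)) * (M - m)"
    unfolding one_minus_Cconst
    by (rule mult_right_mono[OF min.cobounded1 Mm], rule mult_right_mono[OF min.cobounded2 Mm])
  show ?thesis
  proof (cases "\<exists>r\<in>{w-taub..w}. v \<bullet> x i (r - tau r) < v \<bullet> x l (r - tau r)")
    case True
    then obtain r where r: "r \<in> {w-taub..w}"
      and cross: "v \<bullet> x i (r - tau r) < v \<bullet> x l (r - tau r)" by blast
    define q where "q = r - tau r"
    have q: "T0 \<le> q" "q \<le> w" "w - q \<le> 2*taub"
      using tau_range[of r] r w T0 taub_pos unfolding q_def by auto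
    have "exp (-2*K*taub) * (M - m) \<le> exp (-2*K*taub) * ((M - v \<bullet> x i q) + (v \<bullet> x l q - m))"
      using cross unfolding q_def by (intro mult_left_mono) auto
    also have "\<dots> \<le> (M - v \<bullet> x i w) + (v \<bullet> x l w - m)"
      using upper_gap_decay[OF T0 initU i q] lower_gap_decay[OF T0 initL l q]
      by (simp add: algebra_simps)
    finally show ?thesis using by_min(1) by linarith
  next
    case False
    then have "p0 / K * (1 - exp (-K*taub)) * (M - m) \<le> (M - v \<bullet> x i w) + (v \<bullet> x l w - m)"
      by (intro gap_sum_ge_if_ordered[OF T0 initU initL p0 p0_le i l w]) (auto simp: not_less)
    then show ?thesis using by_min(2) by linarith
  qed
qed

lemma projection_spread_le:
  assumes T0: "T0 \<ge> 0" and initU: "upper_on_window v M T0"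
    and initL: "upper_on_window (-v) (-m) T0"
    and p0: "0 \<le> p0" and p0_le: "\<And>j k t. j \<in> {1..N} \<Longrightarrow> k \<in> {1..N} \<Longrightarrow> t \<ge> 0 \<Longrightarrow>
        p0 \<le> psi (x j t) (x k (t - tau t))"
    and i: "i \<in> {1..N}" and l: "l \<in> {1..N}"
    and s: "s \<in> {T0 + 2*taub .. T0 + 3*taub}" and t: "t \<in> {T0 + 2*taub .. T0 + 3*taub}"
  shows "v \<bullet> x i s - v \<bullet> x l t \<le> (1 - exp (-K*taub) * (1 - Cconst K taub p0)) * (M - m)"
proof -
  define w where "w = min s t"
  have w: "T0 + 2*taub \<le> w" "T0 \<le> w" "w \<le> s" "w \<le> t" "s - w \<le> taub" "t - w \<le> taub"
    using s t taub_pos unfolding w_def by auto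
  have "exp (-K*taub) * ((1 - Cconst K taub p0) * (M - m))
      \<le> exp (-K*taub) * ((M - v \<bullet> x i w) + (v \<bullet> x l w - m))"
    using gap_sum_ge[OF T0 initU initL p0 p0_le i l w(1)] by simp
  also have "\<dots> \<le> (M - v \<bullet> x i s) + (v \<bullet> x l t - m)"
    using upper_gap_decay[OF T0 initU i w(2,3,5)] lower_gap_decay[OF T0 initL l w(2,4,6)]
    by (simp add: distrib_left)
  finally show ?thesis by (simp add: algebra_simps)
qed

lemma norm_initial_le_M0:
  assumes j: "j \<in> {1..N}" and q: "q \<in> {-taub..0}"
  shows "norm (x j q) \<le> M0 N taub x"
proof -
  have "bdd_above ((\<lambda>t. norm (x k t)) ` {-taub..0})" if "k \<in> {1..N}" for k
    using that
    by (intro bounded_imp_bdd_above compact_imp_bounded compact_continuous_image continuous_intros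
        continuous_on_subset[OF continuous_on_solution]) auto
  then have "bdd_above (\<Union>k\<in>{1..N}. (\<lambda>t. norm (x k t)) ` {-taub..0})"
    by simp
  moreover have "(\<lambda>p. norm (x (fst p) (snd p))) ` ({1..N} \<times> {-taub..0})
      \<subseteq> (\<Union>k\<in>{1..N}. (\<lambda>t. norm (x k t)) ` {-taub..0})"
    by auto
  ultimately have "bdd_above ((\<lambda>p. norm (x (fst p) (snd p))) ` ({1..N} \<times> {-taub..0}))"
    by (rule bdd_above_mono)
  from cSUP_upper[OF _ this, of "(j, q)"] show ?thesis
    unfolding M0_def using j q by simp
qed

lemma M0_nonneg: "0 \<le> M0 N taub x"
  using norm_initial_le_M0[of 1 0] N2 taub_pos by (simp add: order_trans[OF norm_ge_zero])

lemma norm_le_M0: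
  assumes j: "j \<in> {1..N}" and r: "-taub \<le> r"
  shows "norm (x j r) \<le> M0 N taub x"
proof -
  have "norm (sgn (x j r)) \<le> 1" by (simp add: norm_sgn)
  then have "upper_on_window (sgn (x j r)) (M0 N taub x) 0"
    unfolding upper_on_window_def by (auto intro!: inner_le_if_norm_le_one norm_initial_le_M0)
  from projection_le_after_window[OF order_refl this j, of r] r show ?thesis
    by (simp add: inner_sgn_self)
qed

lemma norm_diff_le_diamD:
  assumes "i \<in> {1..N}" "j \<in> {1..N}"
    and "s \<in> {real n*taub - taub .. real n*taub}" "t \<in> {real n*taub - taub .. real n*taub}"
  shows "norm (x i s - x j t) \<le> diamD N taub x n"
  unfolding diamD_def
proof (rule cSUP_upper2[where x="(i,j,s,t)"])
  have "-taub \<le> real n * taub - taub" using taub_pos by simp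
  then have "norm (x i s - x j t) \<le> 2 * M0 N taub x"
    if "i \<in> {1..N}" "j \<in> {1..N}" "s \<ge> real n*taub - taub" "t \<ge> real n*taub - taub" for i j s t
    using norm_triangle_ineq4[of "x i s" "x j t"] norm_le_M0[of i s] norm_le_M0[of j t] that
    by simp
  then show "bdd_above ((\<lambda>p. case p of (i,j,s,t) \<Rightarrow> norm (x i s - x j t)) ` {(i,j,s,t).
      i \<in> {1..N} \<and> j \<in> {1..N} \<and> s \<in> {real n*taub - taub .. real n*taub}
      \<and> t \<in> {real n*taub - taub .. real n*taub}})"
    by (intro bdd_aboveI2[where M="2 * M0 N taub x"]) auto
qed (use assms in auto)

lemma diamD_le:
  assumes "\<And>i j s t. i \<in> {1..N} \<Longrightarrow> j \<in> {1..N} \<Longrightarrow> s \<in> {real n*taub - taub .. real n*taub} \<Longrightarrow>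
      t \<in> {real n*taub - taub .. real n*taub} \<Longrightarrow> norm (x i s - x j t) \<le> c"
  shows "diamD N taub x n \<le> c"
  unfolding diamD_def using assms N2 taub_pos
  by (intro cSUP_least) (auto intro!: exI[of _ 1] exI[of _ "real n * taub"])

lemma projection_spread_le_diamD:
  assumes p0: "0 \<le> p0"
    and p0_le: "\<And>y z. norm y \<le> M0 N taub x \<Longrightarrow> norm z \<le> M0 N taub x \<Longrightarrow> p0 \<le> psi y z"
    and v: "norm v \<le> 1" and n: "n \<ge> 2" and i: "i \<in> {1..N}" and j: "j \<in> {1..N}"
    and s: "s \<in> {real (n+1)*taub - taub .. real (n+1)*taub}"
    and t: "t \<in> {real (n+1)*taub - taub .. real (n+1)*taub}"
  shows "v \<bullet> x i s - v \<bullet> x j t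
           \<le> (1 - exp (-K*taub) * (1 - Cconst K taub p0)) * diamD N taub x (n-2)"
proof -
  define T0 where "T0 = real (n-2) * taub"
  have T0: "T0 \<ge> 0" unfolding T0_def using taub_pos by simp
  have "real (n+1) * taub = T0 + 3*taub" unfolding T0_def using n by (simp add: algebra_simps)
  then have st: "s \<in> {T0 + 2*taub .. T0 + 3*taub}" "t \<in> {T0 + 2*taub .. T0 + 3*taub}"
    using s t by auto
  have p0_traj: "p0 \<le> psi (x k t) (x l (t - tau t))"
    if "k \<in> {1..N}" "l \<in> {1..N}" "t \<ge> 0" for k l t
    using tau_range[of t] that taub_pos by (intro p0_le norm_le_M0) auto
  define W where "W = {1..N} \<times> {T0 - taub .. T0}"
  have "v \<bullet> x (fst a) (snd a) - v \<bullet> x (fst b) (snd b) \<le> diamD N taub x (n-2)"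
    if "a \<in> W" "b \<in> W" for a b
    using that v unfolding W_def T0_def
    by (simp add: inner_diff_right[symmetric] inner_le_if_norm_le_one norm_diff_le_diamD mem_Times_iff)
  moreover have "W \<noteq> {}" unfolding W_def using N2 taub_pos by auto
  ultimately obtain M m where M: "\<And>a. a \<in> W \<Longrightarrow> v \<bullet> x (fst a) (snd a) \<le> M"
    and m: "\<And>a. a \<in> W \<Longrightarrow> m \<le> v \<bullet> x (fst a) (snd a)"
    and Mm: "M - m \<le> diamD N taub x (n-2)"
    using bounds_of_oscillation_le[of W "\<lambda>p. v \<bullet> x (fst p) (snd p)"] by blast
  have up: "upper_on_window v M T0" and lo: "upper_on_window (-v) (-m) T0"
    unfolding upper_on_window_def using M[of "(k, q)" for k q] m[of "(k, q)" for k q]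
    by (simp_all add: W_def)
  have "v \<bullet> x i s - v \<bullet> x j t \<le> (1 - exp (-K*taub) * (1 - Cconst K taub p0)) * (M - m)"
    by (rule projection_spread_le[OF T0 up lo p0 _ i j st]) (rule p0_traj)
  also have "\<dots> \<le> (1 - exp (-K*taub) * (1 - Cconst K taub p0)) * diamD N taub x (n-2)"
    using Mm contraction_factor_nonneg[OF K_pos taub_pos p0] by (rule mult_left_mono)
  finally show ?thesis .
qed

lemma diamD_step:
  assumes "0 \<le> p0"
    and "\<And>y z. norm y \<le> M0 N taub x \<Longrightarrow> norm z \<le> M0 N taub x \<Longrightarrow> p0 \<le> psi y z"
    and "n \<ge> 2"
  shows "diamD N taub x (n+1) \<le> (1 - exp (-K*taub) * (1 - Cconst K taub p0)) * diamD N taub x (n-2)"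
proof (rule diamD_le)
  fix i j s t assume "i \<in> {1..N}" "j \<in> {1..N}"
    "s \<in> {real (n+1)*taub - taub .. real (n+1)*taub}" "t \<in> {real (n+1)*taub - taub .. real (n+1)*taub}"
  then have "sgn (x i s - x j t) \<bullet> x i s - sgn (x i s - x j t) \<bullet> x j t
      \<le> (1 - exp (-K*taub) * (1 - Cconst K taub p0)) * diamD N taub x (n-2)"
    using assms by (intro projection_spread_le_diamD) (auto simp: norm_sgn)
  then show "norm (x i s - x j t) \<le> (1 - exp (-K*taub) * (1 - Cconst K taub p0)) * diamD N taub x (n-2)"
    by (simp add: inner_diff_right[symmetric] inner_sgn_self)
qed

end

theorem mainTheorem7:
  fixes N :: nat and taub :: real and tau :: "real \<Rightarrow> real"
    and psi :: "'a::euclidean_space \<Rightarrow> 'a \<Rightarrow> real"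
    and x :: "nat \<Rightarrow> real \<Rightarrow> 'a"
  assumes N2: "N \<ge> 2"
    and taub_pos: "taub > 0"
    and tau_cont: "continuous_on {0..} tau"
    and tau_range: "\<And>t. t \<ge> 0 \<Longrightarrow> tau t \<in> {0..taub}"
    and psi_cont: "continuous_on UNIV (\<lambda>p. psi (fst p) (snd p))"
    and psi_bdd: "bounded (range (\<lambda>p. psi (fst p) (snd p)))"
    and psi_pos: "\<And>y z. psi y z > 0"
    and sol: "is_dHK_solution N taub tau psi x"
  defines "K \<equiv> Kconst psi"
    and "C \<equiv> Cconst (Kconst psi) taub (psi0 psi (M0 N taub x))"
    and "Ct \<equiv> 1 - exp (- Kconst psi * taub) * (1 - Cconst (Kconst psi) taub (psi0 psi (M0 N taub x)))"
  shows "(\<forall>n::nat. n \<ge> 2 \<longrightarrow> diamD N taub x (n + 1) \<le> Ct * diamD N taub x (n - 2)) \<and>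
         (\<forall>n::nat. diamD N taub x (3 * n) \<le> Ct ^ n * diamD N taub x 0)"
proof -
  interpret delayed_HK N taub tau psi "Kconst psi" x
    using N2 taub_pos tau_range psi_pos psi_le_Kconst[OF psi_bdd] sol by unfold_locales
  define p0 where "p0 = psi0 psi (M0 N taub x)"
  have p0: "0 \<le> p0" unfolding p0_def using psi0_nonneg psi_pos M0_nonneg by blast
  have p0_le: "p0 \<le> psi y z" if "norm y \<le> M0 N taub x" "norm z \<le> M0 N taub x" for y z
    unfolding p0_def using psi0_le psi_pos that by blast
  have step: "\<And>n. n \<ge> 2 \<Longrightarrow> diamD N taub x (n + 1) \<le> Ct * diamD N taub x (n - 2)"
    unfolding Ct_def using diamD_step[OF p0 p0_le] unfolding p0_def by blast
  moreover have "0 \<le> Ct"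
    unfolding Ct_def using contraction_factor_nonneg[OF K_pos taub_pos p0] unfolding p0_def .
  ultimately show ?thesis using geometric_decay_every_third[of "diamD N taub x" Ct] by blast
qed

end
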